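(* Let $A\in\mathbb{R}^{n\times n}$, $B\in\mathbb{R}^{n\times m}$ with $(A,B)$ stabilizable, and let $Q\succ 0$, $R\succ 0$ be symmetric weight matrices. Let $\tilde F\in\mathbb{R}^{m\times n}$ be such that $A+B\tilde F$ is Hurwitz and let $\tilde P\succ 0$ be the unique solution of $(A+B\tilde F)^T\tilde P+\tilde P(A+B\tilde F)+Q+\tilde F^TR\tilde F=0$; set $V(x):=x^T\tilde P x$. Consider $\dot x(t)=Ax(t)+Bu(t)$, $x(0)=x_0$, under the sample-and-hold law $u(t)=F_k x(t_k)$ for $t\in[t_k,t_{k+1})$, with triggering times $0=t_0<t_1<\cdots$, inter-execution times $\delta_k=t_{k+1}-t_k$ and gains $F_k\in\mathbb{R}^{m\times n}$. Suppose that for some given $\alpha>1$ the sequences $\{t_k\}$, $\{\delta_k\}$, $\{F_k\}$ satisfy, for every $k\ge 0$ and every $\xi\in[0,\delta_k]$, $$J_k(F_k,\xi;x_k)\le \alpha\big(V(x(t_k))-V(x(t_k+\xi))\big).$$ Then the control law is stabilizing. Moreover, for all nonzero $x_0\in\mathbb{R}^n$, the relative performance loss satisfies $\nu(x_0)\le \alpha-1$.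
   Context: $x_k:=x(t_k)$. For $\xi\ge 0$, $J_k(F_k,\xi;x_k):=\int_{t_k}^{t_k+\xi}\big(x(t)^TQx(t)+u(t)^TRu(t)\big)\,dt$, where on this interval the input is held at $u(t)=F_kx_k$. The total cost is $J(x_0):=\sum_{k=0}^{\infty}J_k(F_k,\delta_k;x_k)$, the benchmark cost is $\tilde J(x_0):=x_0^T\tilde P x_0$, and the relative performance loss is $\nu(x_0):=\big(J(x_0)-\tilde J(x_0)\big)/\tilde J(x_0)$. *)

theory Defs
  imports "HOL-Analysis.Analysis"
begin

definition quadf :: "real^'n^'n \<Rightarrow> real^'n \<Rightarrow> real" where
  "quadf M v = v \<bullet> (M *v v)"

definition pos_def :: "real^'n^'n \<Rightarrow> bool" where
  "pos_def M \<longleftrightarrow> transpose M = M \<and> (\<forall>v. v \<noteq> 0 \<longrightarrow> quadf M v > 0)"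

definition cmat :: "real^'n^'m \<Rightarrow> complex^'n^'m" where
  "cmat M = (\<chi> i j. complex_of_real (M $ i $ j))"

definition hurwitz :: "real^'n^'n \<Rightarrow> bool" where
  "hurwitz A \<longleftrightarrow> (\<forall>s::complex. det (mat s - cmat A) = 0 \<longrightarrow> Re s < 0)"

definition stabilizable :: "real^'n^'n \<Rightarrow> real^'m^'n \<Rightarrow> bool" where
  "stabilizable A B \<longleftrightarrow> (\<exists>F::real^'n^'m. hurwitz (A + B ** F))"

definition stage_cost ::
  "real^'n^'n \<Rightarrow> real^'m^'m \<Rightarrow> (real \<Rightarrow> real^'n) \<Rightarrow> real \<Rightarrow> real^'n^'m \<Rightarrow> real \<Rightarrow> real" where
  "stage_cost Q R x tk F \<xi> =
     integral {tk..tk+\<xi>} (\<lambda>t. quadf Q (x t) + quadf R (F *v x tk))"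

definition total_cost ::
  "real^'n^'n \<Rightarrow> real^'m^'m \<Rightarrow> (real \<Rightarrow> real^'n) \<Rightarrow> (nat \<Rightarrow> real) \<Rightarrow> (nat \<Rightarrow> real^'n^'m) \<Rightarrow> real" where
  "total_cost Q R x t F = (\<Sum>k. stage_cost Q R x (t k) (F k) (t (Suc k) - t k))"

definition perf_loss ::
  "real^'n^'n \<Rightarrow> real^'m^'m \<Rightarrow> real^'n^'n \<Rightarrow> (real \<Rightarrow> real^'n) \<Rightarrow> (nat \<Rightarrow> real) \<Rightarrow> (nat \<Rightarrow> real^'n^'m) \<Rightarrow> real^'n \<Rightarrow> real" where
  "perf_loss Q R P x t F x0 = (total_cost Q R x t F - quadf P x0) / quadf P x0"

end

theory Submission
  imports Defs
begin

(* With \<xi> = \<delta>_k the triggering condition telescopes: J_k \<le> \<alpha> (V_k - V_{k+1})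
   for V_k = V(x(t_k)), and J_k \<ge> 0. Hence the stage costs are summable with sum at most
   \<alpha> V(x_0), which is the bound on the performance loss, and the intermediate values of \<xi>
   give V(x(t)) \<le> V_k on the k-th sampling interval. So stability reduces to V_k \<rightarrow> 0.
   Otherwise |x(t_k)| \<ge> c > 0 for all k. In time \<xi> the state moves by at most a \<xi> + b sqrt \<xi>,
   uniformly in k, because the energy \<xi> |u_k|^2 of the held input is bounded by the cost.
   Thus |x| \<ge> c/2 on an initial part of length min(\<delta>_k, h) of every interval, so
   J_k \<ge> \<gamma> min(\<delta>_k, h), and summability forces \<Sum> \<delta>_k < \<infinity>, contradicting t_k \<rightarrow> \<infinity>. *)

lemma quadf_0 [simp]: "quadf P 0 = 0"
  by (simp add: quadf_def)

lemma quadf_scaleR: "quadf P (r *\<^sub>R v) = r\<^sup>2 * quadf P v"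
  by (simp add: quadf_def matrix_vector_mult_scaleR power2_eq_square)

lemma continuous_on_quadf: "continuous_on S (quadf P)"
  unfolding quadf_def[abs_def]
  by (intro continuous_intros linear_continuous_on matrix_vector_mul_bounded_linear)

lemma pos_def_quadf_nonneg: "pos_def P \<Longrightarrow> 0 \<le> quadf P v"
  unfolding pos_def_def by (cases "v = 0") (auto intro: less_imp_le)

lemma quadf_le_norm_sq: "\<exists>C>0. \<forall>v. quadf P v \<le> C * (norm v)\<^sup>2"
proof -
  obtain K where K: "K > 0" "\<And>v. norm (P *v v) \<le> norm v * K"
    using bounded_linear.pos_bounded[OF matrix_vector_mul_bounded_linear[of P]] by blast
  have "quadf P v \<le> K * (norm v)\<^sup>2" for v
  proof -
    have "quadf P v \<le> norm v * norm (P *v v)"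
      unfolding quadf_def by (rule norm_cauchy_schwarz)
    also have "\<dots> \<le> norm v * (norm v * K)"
      by (simp add: K(2) mult_left_mono)
    finally show ?thesis by (simp add: power2_eq_square mult_ac)
  qed
  with K(1) show ?thesis by blast
qed

lemma pos_def_quadf_ge_norm_sq:
  fixes P :: "real^'n^'n"
  assumes "pos_def P"
  shows "\<exists>c>0. \<forall>v. c * (norm v)\<^sup>2 \<le> quadf P v"
proof -
  have "sphere (0::real^'n) 1 \<noteq> {}"
    using vector_choose_size[of 1] by fastforce
  then obtain w where w: "w \<in> sphere 0 1"
    and w_min: "\<And>y. y \<in> sphere 0 1 \<Longrightarrow> quadf P w \<le> quadf P y"
    using continuous_attains_inf[OF compact_sphere _ continuous_on_quadf] by blast
  have "quadf P w > 0"
    using assms w unfolding pos_def_def by (metis norm_zero mem_sphere_0 zero_neq_one)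
  moreover have "quadf P w * (norm v)\<^sup>2 \<le> quadf P v" for v
  proof (cases "v = 0")
    case False
    have "quadf P w \<le> quadf P ((1 / norm v) *\<^sub>R v)"
      using False by (intro w_min) simp
    also have "\<dots> = quadf P v / (norm v)\<^sup>2"
      by (simp add: quadf_scaleR power2_eq_square)
    finally show ?thesis
      using False by (simp add: field_simps)
  qed simp
  ultimately show ?thesis by blast
qed

lemma norm_diff_le_vector_derivative_bound:
  fixes f :: "real \<Rightarrow> 'a::real_normed_vector"
  assumes "a \<le> b"
    and f': "\<And>s. s \<in> {a..b} \<Longrightarrow> (f has_vector_derivative f' s) (at s within {a..b})"
    and bound: "\<And>s. s \<in> {a..b} \<Longrightarrow> norm (f' s) \<le> K"
  shows "norm (f b - f a) \<le> K * (b - a)"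
proof -
  have "norm (f b - f a) \<le> K * norm (b - a)"
  proof (rule differentiable_bound[where S = "{a..b}" and f' = "\<lambda>s h. h *\<^sub>R f' s"])
    show "(f has_derivative (\<lambda>h. h *\<^sub>R f' s)) (at s within {a..b})" if "s \<in> {a..b}" for s
      using f'[OF that] by (simp add: has_vector_derivative_def)
    show "onorm (\<lambda>h. h *\<^sub>R f' s) \<le> K" if "s \<in> {a..b}" for s
    proof (rule onorm_bound)
      show "0 \<le> K"
        using norm_ge_zero bound[OF that] by (rule order_trans)
      show "norm (h *\<^sub>R f' s) \<le> K * norm h" for h
        using bound[OF that] by (simp add: mult_left_mono mult.commute[of K])
    qed
  qed (use assms in auto)
  then show ?thesis
    using assms(1) by simp
qed

lemma sum_le_telescoping:
  fixes J V :: "nat \<Rightarrow> real"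
  assumes "\<And>k. J k \<le> c * (V k - V (Suc k))"
  shows "(\<Sum>k<N. J k) \<le> c * (V 0 - V N)"
proof -
  have "(\<Sum>k<N. J k) \<le> (\<Sum>k<N. c * (V k - V (Suc k)))"
    by (intro sum_mono assms)
  also have "\<dots> = c * (V 0 - V N)"
    by (simp add: sum_distrib_left[symmetric] sum_lessThan_telescope')
  finally show ?thesis .
qed

lemma summable_of_summable_min:
  fixes d :: "nat \<Rightarrow> real"
  assumes "summable (\<lambda>k. min (d k) h)" and "h > 0"
  shows "summable d"
proof -
  have "eventually (\<lambda>k. min (d k) h < h) sequentially"
    using summable_LIMSEQ_zero[OF assms(1)] assms(2) by (rule order_tendstoD)
  then have "eventually (\<lambda>k. min (d k) h = d k) sequentially"
    by eventually_elim linarith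
  with assms(1) show ?thesis
    using summable_cong by fastforce
qed

lemma incseq_unbounded_increments_not_summable:
  fixes t :: "nat \<Rightarrow> real"
  assumes "incseq t" and "filterlim t at_top sequentially"
  shows "\<not> summable (\<lambda>k. t (Suc k) - t k)"
proof
  assume summable: "summable (\<lambda>k. t (Suc k) - t k)"
  have "t N \<le> t 0 + (\<Sum>k. t (Suc k) - t k)" for N
  proof -
    have "(\<Sum>k<N. t (Suc k) - t k) \<le> (\<Sum>k. t (Suc k) - t k)"
      using summable assms(1) by (intro sum_le_suminf) (auto simp: incseq_Suc_iff)
    then show ?thesis
      by (simp add: sum_lessThan_telescope)
  qed
  moreover obtain N where "t N > t 0 + (\<Sum>k. t (Suc k) - t k)"
    using assms(2) by (auto simp: filterlim_at_top_dense eventually_sequentially)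
  ultimately show False
    by (meson not_le)
qed

lemma incseq_unbounded_segment:
  fixes t :: "nat \<Rightarrow> real"
  assumes "incseq t" and "filterlim t at_top sequentially" and "t K \<le> s"
  obtains k where "K \<le> k" and "s \<in> {t k..t (Suc k)}"
proof -
  have "\<exists>n. s < t n"
    using assms(2) by (auto simp: filterlim_at_top_dense eventually_sequentially)
  define n where "n = (LEAST n. s < t n)"
  have "s < t n"
    unfolding n_def using \<open>\<exists>n. s < t n\<close> by (rule LeastI_ex)
  have "K < n"
    using \<open>s < t n\<close> assms(1,3) by (meson incseq_def le_less_trans not_le)
  then obtain k where k: "n = Suc k"
    using not0_implies_Suc by fastforce
  have "\<not> s < t k"
    using not_less_Least[of k "\<lambda>n. s < t n"] k unfolding n_def by simp
  with \<open>s < t n\<close> \<open>K < n\<close> k show ?thesis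
    by (intro that[of k]) auto
qed

locale performance_trigger =
  fixes A :: "real^'n^'n" and B :: "real^'m^'n"
    and Q :: "real^'n^'n" and R :: "real^'m^'m" and P :: "real^'n^'n"
    and \<alpha> :: real and t :: "nat \<Rightarrow> real" and F :: "nat \<Rightarrow> real^'n^'m"
    and x :: "real \<Rightarrow> real^'n"
  assumes Q: "pos_def Q" and R: "pos_def R" and P: "pos_def P"
    and t_less: "\<And>k. t k < t (Suc k)"
    and t_unbounded: "filterlim t at_top sequentially"
    and ode: "\<And>k s. s \<in> {t k..t (Suc k)} \<Longrightarrow>
       (x has_vector_derivative (A *v x s + B *v (F k *v x (t k)))) (at s within {t k..t (Suc k)})"
    and \<alpha>_pos: "\<alpha> > 0"
    and trigger: "\<And>k \<xi>. \<xi> \<in> {0..t (Suc k) - t k} \<Longrightarrow>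
       stage_cost Q R x (t k) (F k) \<xi> \<le> \<alpha> * (quadf P (x (t k)) - quadf P (x (t k + \<xi>)))"
begin

abbreviation \<delta> :: "nat \<Rightarrow> real" where
  "\<delta> k \<equiv> t (Suc k) - t k"

abbreviation u :: "nat \<Rightarrow> real^'m" where
  "u k \<equiv> F k *v x (t k)"

definition V :: "nat \<Rightarrow> real" where
  "V k = quadf P (x (t k))"

definition J :: "nat \<Rightarrow> real" where
  "J k = stage_cost Q R x (t k) (F k) (\<delta> k)"

lemma incseq_t: "incseq t"
  using t_less by (simp add: incseq_Suc_iff less_imp_le)

lemma continuous_on_segment: "continuous_on {t k..t (Suc k)} x"
  unfolding continuous_on_eq_continuous_within
  using ode has_vector_derivative_continuous by blast

lemma running_cost_integrable:
  assumes "\<xi> \<in> {0..\<delta> k}"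
  shows "(\<lambda>s. quadf Q (x s) + quadf R (u k)) integrable_on {t k..t k + \<xi>}"
proof -
  have "{t k..t k + \<xi>} \<subseteq> {t k..t (Suc k)}"
    using assms by auto
  then have "continuous_on {t k..t k + \<xi>} x"
    using continuous_on_segment continuous_on_subset by blast
  then have "continuous_on {t k..t k + \<xi>} (\<lambda>s. quadf Q (x s) + quadf R (u k))"
    by (intro continuous_intros continuous_on_compose2[OF continuous_on_quadf]) auto
  then show ?thesis
    by (rule integrable_continuous_interval)
qed

lemma stage_cost_ge:
  assumes "\<xi> \<in> {0..\<delta> k}"
    and "\<And>s. s \<in> {t k..t k + \<xi>} \<Longrightarrow> g \<le> quadf Q (x s) + quadf R (u k)"
  shows "\<xi> * g \<le> stage_cost Q R x (t k) (F k) \<xi>"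
proof -
  have "integral {t k..t k + \<xi>} (\<lambda>s. g)
      \<le> integral {t k..t k + \<xi>} (\<lambda>s. quadf Q (x s) + quadf R (u k))"
    using assms by (intro integral_le running_cost_integrable) auto
  then show ?thesis
    using assms(1) by (simp add: stage_cost_def)
qed

lemma stage_cost_nonneg: "\<xi> \<in> {0..\<delta> k} \<Longrightarrow> 0 \<le> stage_cost Q R x (t k) (F k) \<xi>"
  using stage_cost_ge[of \<xi> k 0] pos_def_quadf_nonneg[OF Q] pos_def_quadf_nonneg[OF R] by simp

lemma stage_cost_ge_input_energy:
  "\<xi> \<in> {0..\<delta> k} \<Longrightarrow> \<xi> * quadf R (u k) \<le> stage_cost Q R x (t k) (F k) \<xi>"
  using stage_cost_ge[of \<xi> k "quadf R (u k)"] pos_def_quadf_nonneg[OF Q] by simp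

lemma stage_cost_mono:
  assumes "\<xi> \<in> {0..\<delta> k}" and "\<xi>' \<in> {\<xi>..\<delta> k}"
  shows "stage_cost Q R x (t k) (F k) \<xi> \<le> stage_cost Q R x (t k) (F k) \<xi>'"
  unfolding stage_cost_def
proof (rule integral_subset_le)
  show "(\<lambda>s. quadf Q (x s) + quadf R (u k)) integrable_on {t k..t k + \<xi>}"
    and "(\<lambda>s. quadf Q (x s) + quadf R (u k)) integrable_on {t k..t k + \<xi>'}"
    using assms by (auto intro: running_cost_integrable)
  show "\<forall>s\<in>{t k..t k + \<xi>'}. 0 \<le> quadf Q (x s) + quadf R (u k)"
    using pos_def_quadf_nonneg[OF Q] pos_def_quadf_nonneg[OF R] by (simp add: add_nonneg_nonneg)
qed (use assms in auto)

lemma V_nonneg: "0 \<le> V k"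
  by (simp add: V_def pos_def_quadf_nonneg[OF P])

lemma quadf_le_V:
  assumes "s \<in> {t k..t (Suc k)}"
  shows "quadf P (x s) \<le> V k"
proof -
  have "0 \<le> \<alpha> * (V k - quadf P (x s))"
    using stage_cost_nonneg[of "s - t k" k] trigger[of "s - t k" k] assms by (simp add: V_def)
  then show ?thesis
    using \<alpha>_pos by (simp add: zero_le_mult_iff)
qed

lemma J_le_V_diff: "J k \<le> \<alpha> * (V k - V (Suc k))"
  using trigger[of "\<delta> k" k] t_less[of k] by (simp add: J_def V_def)

lemma J_nonneg: "0 \<le> J k"
  using stage_cost_nonneg[of "\<delta> k" k] t_less[of k] by (simp add: J_def)

lemma decseq_V: "decseq V"
  using quadf_le_V[of "t (Suc k)" k for k] t_less by (simp add: decseq_Suc_iff V_def less_imp_le)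

lemma V_le_V0: "V k \<le> V 0"
  using decseq_V by (simp add: decseq_def)

lemma J_partial_sums_le: "(\<Sum>k<N. J k) \<le> \<alpha> * V 0"
proof -
  have "0 \<le> \<alpha> * V N"
    using \<alpha>_pos V_nonneg by simp
  with sum_le_telescoping[of J \<alpha> V N, OF J_le_V_diff] show ?thesis
    by (simp add: right_diff_distrib)
qed

lemma summable_J: "summable J"
  using J_nonneg J_partial_sums_le by (rule summableI_nonneg_bounded)

lemma suminf_J_le: "suminf J \<le> \<alpha> * V 0"
  using summable_J J_partial_sums_le by (rule suminf_le_const)

lemma state_bounded: "\<exists>M. \<forall>k. \<forall>s \<in> {t k..t (Suc k)}. norm (x s) \<le> M"
proof -
  obtain p where p: "p > 0" "\<And>v. p * (norm v)\<^sup>2 \<le> quadf P v"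
    using pos_def_quadf_ge_norm_sq[OF P] by blast
  have "norm (x s) \<le> sqrt (V 0 / p)" if "s \<in> {t k..t (Suc k)}" for k s
  proof -
    have "p * (norm (x s))\<^sup>2 \<le> V 0"
      using p(2)[of "x s"] quadf_le_V[OF that] V_le_V0[of k] by linarith
    then have "(norm (x s))\<^sup>2 \<le> V 0 / p"
      using p(1) by (simp add: field_simps)
    then show ?thesis
      by (rule real_le_rsqrt)
  qed
  then show ?thesis by blast
qed

lemma input_energy_bounded: "\<exists>E. \<forall>k. \<forall>\<xi> \<in> {0..\<delta> k}. \<xi> * (norm (u k))\<^sup>2 \<le> E"
proof -
  obtain r where r: "r > 0" "\<And>v. r * (norm v)\<^sup>2 \<le> quadf R v"
    using pos_def_quadf_ge_norm_sq[OF R] by blast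
  have "\<xi> * (norm (u k))\<^sup>2 \<le> \<alpha> * V 0 / r" if \<xi>: "\<xi> \<in> {0..\<delta> k}" for k \<xi>
  proof -
    have "r * (\<xi> * (norm (u k))\<^sup>2) \<le> \<xi> * quadf R (u k)"
      using r(2)[of "u k"] \<xi> by (simp add: mult.left_commute mult_left_mono)
    also have "\<dots> \<le> \<alpha> * (V k - quadf P (x (t k + \<xi>)))"
      using stage_cost_ge_input_energy[OF \<xi>] trigger[OF \<xi>] by (simp add: V_def)
    also have "\<dots> \<le> \<alpha> * V 0"
      using \<alpha>_pos V_le_V0[of k] pos_def_quadf_nonneg[OF P, of "x (t k + \<xi>)"] by simp
    finally show ?thesis
      using r(1) by (simp add: field_simps)
  qed
  then show ?thesis by blast
qed

lemma displacement_bound: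
  "\<exists>a b. \<forall>k. \<forall>\<xi> \<in> {0..\<delta> k}. norm (x (t k + \<xi>) - x (t k)) \<le> a * \<xi> + b * sqrt \<xi>"
proof -
  obtain M where M: "\<And>k s. s \<in> {t k..t (Suc k)} \<Longrightarrow> norm (x s) \<le> M"
    using state_bounded by blast
  obtain E where E: "\<And>k \<xi>. \<xi> \<in> {0..\<delta> k} \<Longrightarrow> \<xi> * (norm (u k))\<^sup>2 \<le> E"
    using input_energy_bounded by blast
  obtain a where a: "a > 0" "\<And>v. norm (A *v v) \<le> norm v * a"
    using bounded_linear.pos_bounded[OF matrix_vector_mul_bounded_linear[of A]] by blast
  obtain b where b: "b > 0" "\<And>v. norm (B *v v) \<le> norm v * b"
    using bounded_linear.pos_bounded[OF matrix_vector_mul_bounded_linear[of B]] by blast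
  have "norm (x (t k + \<xi>) - x (t k)) \<le> a * M * \<xi> + b * sqrt E * sqrt \<xi>"
    if \<xi>: "\<xi> \<in> {0..\<delta> k}" for k \<xi>
  proof -
    have sub: "{t k..t k + \<xi>} \<subseteq> {t k..t (Suc k)}"
      using \<xi> by auto
    have "norm (x (t k + \<xi>) - x (t k)) \<le> (a * M + b * norm (u k)) * (t k + \<xi> - t k)"
    proof (rule norm_diff_le_vector_derivative_bound)
      show "(x has_vector_derivative (A *v x s + B *v u k)) (at s within {t k..t k + \<xi>})"
        if "s \<in> {t k..t k + \<xi>}" for s
        using that sub by (blast intro: has_vector_derivative_within_subset ode)
      show "norm (A *v x s + B *v u k) \<le> a * M + b * norm (u k)"
        if "s \<in> {t k..t k + \<xi>}" for s
      proof -
        have "norm (A *v x s + B *v u k) \<le> norm (x s) * a + norm (u k) * b"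
          using order_trans[OF norm_triangle_ineq add_mono[OF a(2) b(2)]] .
        also have "\<dots> \<le> M * a + norm (u k) * b"
          using M[of s k] that sub a(1) by (auto intro: mult_right_mono)
        finally show ?thesis
          by (simp add: mult.commute)
      qed
    qed (use \<xi> in auto)
    also have "\<dots> = a * M * \<xi> + b * (sqrt \<xi> * sqrt (\<xi> * (norm (u k))\<^sup>2))"
      using \<xi> by (simp add: real_sqrt_mult algebra_simps)
    also have "\<dots> \<le> a * M * \<xi> + b * (sqrt \<xi> * sqrt E)"
      using E[OF \<xi>] \<xi> b(1) by (intro add_left_mono mult_left_mono real_sqrt_le_mono) auto
    finally show ?thesis
      by (simp add: mult_ac)
  qed
  then show ?thesis by blast
qed

lemma displacement_uniformly_small:
  assumes "\<epsilon> > 0"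
  shows "\<exists>h>0. \<forall>k. \<forall>\<xi> \<in> {0..min (\<delta> k) h}. norm (x (t k + \<xi>) - x (t k)) \<le> \<epsilon>"
proof -
  obtain a b where ab: "\<And>k \<xi>. \<xi> \<in> {0..\<delta> k} \<Longrightarrow> norm (x (t k + \<xi>) - x (t k)) \<le> a * \<xi> + b * sqrt \<xi>"
    using displacement_bound by blast
  have "((\<lambda>\<xi>. a * \<xi> + b * sqrt \<xi>) \<longlongrightarrow> a * 0 + b * sqrt 0) (at_right 0)"
    by (intro tendsto_intros)
  then have "eventually (\<lambda>\<xi>. a * \<xi> + b * sqrt \<xi> < \<epsilon>) (at_right 0)"
    using assms by (simp add: order_tendstoD)
  then obtain h0 where h0: "h0 > 0" "\<And>\<xi>. 0 < \<xi> \<Longrightarrow> \<xi> < h0 \<Longrightarrow> a * \<xi> + b * sqrt \<xi> < \<epsilon>"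
    by (auto simp: eventually_at_right_field)
  have "norm (x (t k + \<xi>) - x (t k)) \<le> \<epsilon>" if \<xi>: "\<xi> \<in> {0..min (\<delta> k) (h0 / 2)}" for k \<xi>
  proof (cases "\<xi> = 0")
    case False
    then have "a * \<xi> + b * sqrt \<xi> < \<epsilon>"
      using \<xi> h0 by (intro h0(2)) auto
    with ab[of \<xi> k] \<xi> show ?thesis by simp
  qed (use assms in simp)
  with h0(1) show ?thesis
    by (intro exI[of _ "h0 / 2"]) auto
qed

lemma J_ge_if_sampled_state_away_from_0:
  assumes "c > 0" and away: "\<And>k. c \<le> norm (x (t k))"
  shows "\<exists>h>0. \<exists>\<gamma>>0. \<forall>k. min (\<delta> k) h * \<gamma> \<le> J k"
proof -
  obtain h where h: "h > 0"
    and disp: "\<And>k \<xi>. \<xi> \<in> {0..min (\<delta> k) h} \<Longrightarrow> norm (x (t k + \<xi>) - x (t k)) \<le> c / 2"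
    using displacement_uniformly_small[of "c / 2"] \<open>c > 0\<close> by auto
  obtain q where q: "q > 0" "\<And>v. q * (norm v)\<^sup>2 \<le> quadf Q v"
    using pos_def_quadf_ge_norm_sq[OF Q] by blast
  define \<gamma> where "\<gamma> = q * (c / 2)\<^sup>2"
  have "min (\<delta> k) h * \<gamma> \<le> J k" for k
  proof -
    define m where "m = min (\<delta> k) h"
    have m: "m \<in> {0..\<delta> k}"
      using t_less[of k] h by (auto simp: m_def)
    have "m * \<gamma> \<le> stage_cost Q R x (t k) (F k) m"
    proof (rule stage_cost_ge[OF m])
      fix s assume s: "s \<in> {t k..t k + m}"
      have "s - t k \<in> {0..min (\<delta> k) h}"
        using s by (auto simp: m_def)
      from disp[OF this] have "norm (x s - x (t k)) \<le> c / 2"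
        by simp
      then have "c / 2 \<le> norm (x s)"
        using away[of k] norm_triangle_ineq2[of "x (t k)" "x s"]
        by (simp add: norm_minus_commute)
      then have "\<gamma> \<le> q * (norm (x s))\<^sup>2"
        unfolding \<gamma>_def using q(1) \<open>c > 0\<close> by (simp add: power_mono)
      then show "\<gamma> \<le> quadf Q (x s) + quadf R (u k)"
        using q(2)[of "x s"] pos_def_quadf_nonneg[OF R, of "u k"] by linarith
    qed
    also have "\<dots> \<le> J k"
      unfolding J_def using m by (intro stage_cost_mono) auto
    finally show ?thesis
      by (simp add: m_def)
  qed
  moreover have "\<gamma> > 0"
    using q(1) \<open>c > 0\<close> by (simp add: \<gamma>_def)
  ultimately show ?thesis
    using h by blast
qed

lemma ex_V_less:
  assumes "\<epsilon> > 0"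
  shows "\<exists>K. V K < \<epsilon>"
proof (rule ccontr)
  assume "\<nexists>K. V K < \<epsilon>"
  then have V_ge: "\<epsilon> \<le> V k" for k
    by (simp add: not_less)
  obtain C where C: "C > 0" "\<And>v. quadf P v \<le> C * (norm v)\<^sup>2"
    using quadf_le_norm_sq by blast
  have "sqrt (\<epsilon> / C) \<le> norm (x (t k))" for k
  proof -
    have "\<epsilon> / C \<le> (norm (x (t k)))\<^sup>2"
      using V_ge[of k] C(2)[of "x (t k)"] C(1) by (simp add: V_def field_simps)
    then show ?thesis
      by (simp add: real_le_lsqrt)
  qed
  then obtain h \<gamma> where h: "h > 0" "\<gamma> > 0" and J_ge: "\<And>k. min (\<delta> k) h * \<gamma> \<le> J k"
    using J_ge_if_sampled_state_away_from_0[of "sqrt (\<epsilon> / C)"] assms C(1) by auto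
  have "summable (\<lambda>k. min (\<delta> k) h)"
  proof (rule summable_comparison_test'[where N = 0])
    show "summable (\<lambda>k. J k / \<gamma>)"
      using summable_J by (rule summable_divide)
    show "norm (min (\<delta> k) h) \<le> J k / \<gamma>" for k
      using J_ge[of k] h t_less[of k] by (simp add: field_simps)
  qed
  then have "summable \<delta>"
    using h(1) by (rule summable_of_summable_min)
  then show False
    using incseq_unbounded_increments_not_summable[OF incseq_t t_unbounded] by simp
qed

lemma V_tendsto_0: "V \<longlonglongrightarrow> 0"
proof (rule order_tendstoI)
  fix a :: real assume "a < 0"
  then show "eventually (\<lambda>k. a < V k) sequentially"
    using V_nonneg by (auto intro: always_eventually less_le_trans)
next
  fix \<epsilon> :: real assume "\<epsilon> > 0"
  then obtain K where "V K < \<epsilon>"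
    using ex_V_less by blast
  then show "eventually (\<lambda>k. V k < \<epsilon>) sequentially"
    using decseq_V unfolding eventually_sequentially decseq_def by (meson le_less_trans)
qed

lemma state_tendsto_0: "(x \<longlongrightarrow> 0) at_top"
proof (rule tendstoI)
  fix e :: real assume "e > 0"
  obtain p where p: "p > 0" "\<And>v. p * (norm v)\<^sup>2 \<le> quadf P v"
    using pos_def_quadf_ge_norm_sq[OF P] by blast
  obtain K where K: "\<And>k. K \<le> k \<Longrightarrow> V k < p * e\<^sup>2"
    using order_tendstoD(2)[OF V_tendsto_0, of "p * e\<^sup>2"] p(1) \<open>e > 0\<close>
    by (auto simp: eventually_sequentially)
  have "norm (x s) < e" if s: "t K \<le> s" for s
  proof -
    obtain k where "K \<le> k" "s \<in> {t k..t (Suc k)}"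
      using incseq_unbounded_segment[OF incseq_t t_unbounded s] .
    then have "p * (norm (x s))\<^sup>2 < p * e\<^sup>2"
      using p(2)[of "x s"] quadf_le_V K by (meson le_less_trans)
    then show ?thesis
      using p(1) \<open>e > 0\<close> by (simp add: power2_less_imp_less)
  qed
  then show "eventually (\<lambda>s. dist (x s) 0 < e) at_top"
    by (auto simp: eventually_at_top_linorder)
qed

end

theorem theorem1:
  fixes A :: "real^'n^'n" and B :: "real^'m^'n"
    and Q :: "real^'n^'n" and R :: "real^'m^'m"
    and Ft :: "real^'n^'m" and Pt :: "real^'n^'n"
    and \<alpha> :: real and x0 :: "real^'n"
    and t :: "nat \<Rightarrow> real" and F :: "nat \<Rightarrow> real^'n^'m"
    and x :: "real \<Rightarrow> real^'n"
  assumes stab: "stabilizable A B"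
    and Q: "pos_def Q" and R: "pos_def R"
    and hur: "hurwitz (A + B ** Ft)"
    and Pt: "pos_def Pt"
    and lyap: "transpose (A + B ** Ft) ** Pt + Pt ** (A + B ** Ft) + Q + transpose Ft ** R ** Ft = 0"
    and t0: "t 0 = 0" and tinc: "\<And>k. t k < t (Suc k)"
    and tunb: "filterlim t at_top sequentially"
    and x0: "x 0 = x0"
    and ode: "\<And>k s. s \<in> {t k..t (Suc k)} \<Longrightarrow>
       (x has_vector_derivative (A *v x s + B *v (F k *v x (t k)))) (at s within {t k..t (Suc k)})"
    and \<alpha>: "\<alpha> > 1"
    and trig: "\<And>k \<xi>. \<xi> \<in> {0..t (Suc k) - t k} \<Longrightarrow>
       stage_cost Q R x (t k) (F k) \<xi> \<le> \<alpha> * (quadf Pt (x (t k)) - quadf Pt (x (t k + \<xi>)))"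
  shows "(x \<longlongrightarrow> 0) at_top \<and>
    (x0 \<noteq> 0 \<longrightarrow> summable (\<lambda>k. stage_cost Q R x (t k) (F k) (t (Suc k) - t k))
                  \<and> perf_loss Q R Pt x t F x0 \<le> \<alpha> - 1)"
proof -
  interpret performance_trigger A B Q R Pt \<alpha> t F x
    using Q R Pt tinc tunb ode \<alpha> trig by unfold_locales auto
  have J_eq: "(\<lambda>k. stage_cost Q R x (t k) (F k) (t (Suc k) - t k)) = J"
    by (simp add: J_def[abs_def])
  have cost_le: "total_cost Q R x t F \<le> \<alpha> * quadf Pt x0"
    using suminf_J_le t0 x0 by (simp add: total_cost_def J_eq V_def)
  show ?thesis
  proof (intro conjI impI)
    show "(x \<longlongrightarrow> 0) at_top"
      by (rule state_tendsto_0)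
    show "summable (\<lambda>k. stage_cost Q R x (t k) (F k) (t (Suc k) - t k))"
      unfolding J_eq by (rule summable_J)
    assume "x0 \<noteq> 0"
    with Pt have "quadf Pt x0 > 0"
      by (simp add: pos_def_def)
    with cost_le show "perf_loss Q R Pt x t F x0 \<le> \<alpha> - 1"
      by (simp add: perf_loss_def pos_divide_le_eq left_diff_distrib)
  qed
qed

end
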